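(* Let ${\sf SComp}$ be the non-symmetric suboperad of ${\sf T}\mathbb{N}_3$ generated by $00$, $01$ and $02$. Then the elements of ${\sf SComp}$ are exactly the words over the alphabet $\{0,1,2\}$ that begin with $0$. Moreover, the elements of ${\sf SComp}$ of arity $n$ are in bijection with the segmented compositions of the integer $n$. Finally, ${\sf SComp}$ is isomorphic to the non-symmetric operad generated by three generators ${\tt a},{\tt b},{\tt c}$ of arity two subject to the nine relations $${\tt a}\circ_1{\tt a}={\tt a}\circ_2{\tt a},\quad {\tt b}\circ_1{\tt a}={\tt a}\circ_2{\tt b},\quad {\tt b}\circ_1{\tt b}={\tt b}\circ_2{\tt a},$$ $${\tt c}\circ_1{\tt a}={\tt a}\circ_2{\tt c},\quad {\tt c}\circ_1{\tt c}={\tt c}\circ_2{\tt a},\quad {\tt b}\circ_1{\tt c}={\tt c}\circ_2{\tt c},$$ $${\tt c}\circ_1{\tt b}={\tt b}\circ_2{\tt b},\quad {\tt a}\circ_1{\tt b}={\tt b}\circ_2{\tt c},\quad {\tt a}\circ_1{\tt c}={\tt c}\circ_2{\tt b}.$$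
   Context: Let $\mathbb{N}_3=\mathbb{Z}/3\mathbb{Z}=\{0,1,2\}$ be the additive monoid of integers modulo $3$. ${\sf T}\mathbb{N}_3=\biguplus_{n\ge1}\mathbb{N}_3^n$, elements of arity $n$ being words $x=(x_1,\dots,x_n)$ of length $n$ over $\{0,1,2\}$ (written without separators, e.g. $02=(0,2)$), with partial compositions $x\circ_i y:=(x_1,\dots,x_{i-1},x_i+y_1,\dots,x_i+y_m,x_{i+1},\dots,x_n)$ (sums modulo $3$) for $x$ of arity $n$, $y$ of arity $m$, $1\le i\le n$; it is a non-symmetric set-operad with unit $(0)$. The non-symmetric suboperad generated by a set $S$ is the smallest subset containing $S$ and the unit $(0)$ and closed under all $\circ_i$. A segmented composition of $n$ is a finite nonempty sequence of compositions (finite sequences of positive integers) whose total sum of parts is $n$; equivalently, a row of $n$ cells where each of the $n-1$ gaps between consecutive cells is either empty, a part separator, or a segment separator. A non-symmetric operad generated by generators subject to relations means the quotient of the free non-symmetric set-operad on those generators by the smallest operad congruence containing the given relations. *)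

theory Defs
  imports Main
begin

text \<open>Words are nat lists with letters in {0,1,2}; arity = length.
  Partial composition x o_i y (1-based i), sums modulo 3.\<close>

definition wcomp :: "nat list \<Rightarrow> nat \<Rightarrow> nat list \<Rightarrow> nat list" where
  "wcomp x i y = take (i - 1) x @ map (\<lambda>b. (x ! (i - 1) + b) mod 3) y @ drop i x"

definition TN3 :: "nat list set" where
  "TN3 = {x. x \<noteq> [] \<and> set x \<subseteq> {0, 1, 2}}"

inductive_set SComp :: "nat list set" where
  unit: "[0] \<in> SComp"
| gen00: "[0, 0] \<in> SComp"
| gen01: "[0, 1] \<in> SComp"
| gen02: "[0, 2] \<in> SComp"
| comp: "x \<in> SComp \<Longrightarrow> y \<in> SComp \<Longrightarrow> 1 \<le> i \<Longrightarrow> i \<le> length x \<Longrightarrow> wcomp x i y \<in> SComp"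

definition segcomp :: "nat \<Rightarrow> nat list list set" where
  "segcomp n = {S. S \<noteq> [] \<and> (\<forall>c \<in> set S. c \<noteq> [] \<and> (\<forall>p \<in> set c. 0 < p))
                  \<and> sum_list (map sum_list S) = n}"

datatype gen = A | B | C

text \<open>Syntax trees: Leaf is the unit, Node g l r is g with l and r grafted.\<close>
datatype tree = Leaf | Node gen tree tree

fun arity :: "tree \<Rightarrow> nat" where
  "arity Leaf = 1"
| "arity (Node g l r) = arity l + arity r"

fun graft :: "tree \<Rightarrow> nat \<Rightarrow> tree \<Rightarrow> tree" where
  "graft Leaf i s = (if i = 1 then s else Leaf)"
| "graft (Node g l r) i s =
     (if i \<le> arity l then Node g (graft l i s) r
      else Node g l (graft r (i - arity l) s))"

definition gtree :: "gen \<Rightarrow> tree" where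
  "gtree g = Node g Leaf Leaf"

definition rels :: "(tree \<times> tree) set" where
  "rels = {
    (graft (gtree A) 1 (gtree A), graft (gtree A) 2 (gtree A)),
    (graft (gtree B) 1 (gtree A), graft (gtree A) 2 (gtree B)),
    (graft (gtree B) 1 (gtree B), graft (gtree B) 2 (gtree A)),
    (graft (gtree C) 1 (gtree A), graft (gtree A) 2 (gtree C)),
    (graft (gtree C) 1 (gtree C), graft (gtree C) 2 (gtree A)),
    (graft (gtree B) 1 (gtree C), graft (gtree C) 2 (gtree C)),
    (graft (gtree C) 1 (gtree B), graft (gtree B) 2 (gtree B)),
    (graft (gtree A) 1 (gtree B), graft (gtree B) 2 (gtree C)),
    (graft (gtree A) 1 (gtree C), graft (gtree C) 2 (gtree B)) }"

inductive opcong :: "tree \<Rightarrow> tree \<Rightarrow> bool" where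
  rel: "(s, t) \<in> rels \<Longrightarrow> opcong s t"
| refl: "opcong s s"
| sym: "opcong s t \<Longrightarrow> opcong t s"
| trans: "opcong s t \<Longrightarrow> opcong t u \<Longrightarrow> opcong s u"
| compL: "opcong s s' \<Longrightarrow> 1 \<le> i \<Longrightarrow> i \<le> arity s \<Longrightarrow> opcong (graft s i t) (graft s' i t)"
| compR: "opcong t t' \<Longrightarrow> 1 \<le> i \<Longrightarrow> i \<le> arity s \<Longrightarrow> opcong (graft s i t) (graft s i t')"

text \<open>An isomorphism between the quotient (free operad / opcong) and SComp is the same
  as a morphism phi from the free operad to SComp (preserving arity, unit and partial
  compositions) which is surjective onto SComp and whose kernel is exactly opcong.\<close>
definition presents_SComp :: "(tree \<Rightarrow> nat list) \<Rightarrow> bool" where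
  "presents_SComp phi \<longleftrightarrow>
     (\<forall>t. phi t \<in> SComp \<and> length (phi t) = arity t)
   \<and> phi Leaf = [0]
   \<and> (\<forall>s t i. 1 \<le> i \<and> i \<le> arity s \<longrightarrow> phi (graft s i t) = wcomp (phi s) i (phi t))
   \<and> SComp \<subseteq> range phi
   \<and> (\<forall>s t. phi s = phi t \<longleftrightarrow> opcong s t)"

end

theory Submission
  imports Defs
begin

text \<open>Composing with 0a at the last position appends the letter last + a, so every word
  starting with 0 is generated, and composition never changes the first letter. Reading
  the letters after the first one as the gaps of a row of cells (0: no separator, 1: part
  separator, 2: segment separator) gives the segmented compositions. For the presentation,
  evaluate trees by x o y := x @ (y shifted by the value of the generator): the nine
  relations all have the form x o_1 y = y o_2 (x - y), so they rotate every tree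
  into a right comb, and a right comb is recovered from its word by reading off
  successive differences.\<close>

section \<open>Words starting with 0\<close>

definition shift_word :: "nat \<Rightarrow> nat list \<Rightarrow> nat list" where
  "shift_word k y = map (\<lambda>b. (k + b) mod 3) y"

definition zero_words :: "nat list set" where
  "zero_words = {x. x \<noteq> [] \<and> set x \<subseteq> {0, 1, 2} \<and> hd x = 0}"

lemma mod_3_cases: "(n::nat) mod 3 \<in> {0, 1, 2}"
  by (auto; presburger)

lemma set_shift_word: "set (shift_word k y) \<subseteq> {0, 1, 2}"
  unfolding shift_word_def using mod_3_cases by auto

lemma wcomp_conv_shift_word:
  "wcomp x i y = take (i - 1) x @ shift_word (x ! (i - 1)) y @ drop i x"
  unfolding wcomp_def shift_word_def ..

lemma wcomp_in_zero_words:
  assumes "x \<in> zero_words" "y \<in> zero_words"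
  shows "wcomp x i y \<in> zero_words"
proof -
  obtain xs ys where x: "x = 0 # xs" and y: "y = 0 # ys"
    using assms by (cases x; cases y) (auto simp: zero_words_def)
  have x_letters: "set x \<subseteq> {0, 1, 2}"
    using assms(1) by (simp add: zero_words_def)
  have "set (take (i - 1) x) \<subseteq> {0, 1, 2}" "set (drop i x) \<subseteq> {0, 1, 2}"
    using order_trans[OF set_take_subset x_letters] order_trans[OF set_drop_subset x_letters] .
  then have "set (wcomp x i y) \<subseteq> {0, 1, 2}"
    using set_shift_word unfolding wcomp_conv_shift_word set_append by (intro Un_least)
  moreover have "hd (wcomp x i y) = 0"
    using x y by (cases "i - 1") (simp_all add: wcomp_conv_shift_word shift_word_def)
  moreover have "wcomp x i y \<noteq> []"
    using y by (simp add: wcomp_conv_shift_word shift_word_def)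
  ultimately show ?thesis unfolding zero_words_def by blast
qed

lemma SComp_subset_zero_words: "SComp \<subseteq> zero_words"
proof
  fix x assume "x \<in> SComp"
  then show "x \<in> zero_words"
  proof induction
    case (comp x y i)
    then show ?case using wcomp_in_zero_words by simp
  qed (auto simp: zero_words_def)
qed

lemma wcomp_last_appends:
  assumes "xs \<noteq> []" "a \<in> {0, 1, 2}" "last xs \<in> {0, 1, 2}"
  shows "wcomp xs (length xs) [0, (a + 3 - last xs) mod 3] = xs @ [a]"
proof -
  have "wcomp xs (length xs) [0, (a + 3 - last xs) mod 3]
      = butlast xs @ [last xs mod 3, (last xs + (a + 3 - last xs) mod 3) mod 3]"
    using assms(1) by (simp add: wcomp_def last_conv_nth butlast_conv_take)
  also have "\<dots> = butlast xs @ [last xs, a]"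
    using assms(2,3) by auto
  finally show ?thesis
    using assms(1) by simp
qed

lemma zero_words_subset_SComp: "zero_words \<subseteq> SComp"
proof
  fix x assume "x \<in> zero_words"
  then show "x \<in> SComp"
  proof (induction x rule: rev_induct)
    case (snoc a xs)
    show ?case
    proof (cases "xs = []")
      case True
      then show ?thesis using snoc.prems SComp.unit by (simp add: zero_words_def)
    next
      case False
      have xs: "xs \<in> SComp" "set xs \<subseteq> {0, 1, 2}"
        using snoc False by (auto simp: zero_words_def)
      then have last: "last xs \<in> {0, 1, 2}"
        using False last_in_set by blast
      have a: "a \<in> {0, 1, 2}" using snoc.prems by (simp add: zero_words_def)
      have "[0, (a + 3 - last xs) mod 3] \<in> SComp"
        using mod_3_cases[of "a + 3 - last xs"] SComp.gen00 SComp.gen01 SComp.gen02 by auto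
      from SComp.comp[OF xs(1) this, of "length xs"]
      show ?thesis
        using wcomp_last_appends[OF False a last] False by (simp add: Suc_le_eq)
    qed
  qed (simp add: zero_words_def)
qed

lemma SComp_eq_zero_words: "SComp = zero_words"
  using SComp_subset_zero_words zero_words_subset_SComp by blast

section \<open>Segmented compositions\<close>

definition segmented :: "nat list list \<Rightarrow> bool" where
  "segmented S \<longleftrightarrow> S \<noteq> [] \<and> (\<forall>c \<in> set S. c \<noteq> [] \<and> (\<forall>p \<in> set c. 0 < p))"

lemma segcomp_eq_segmented: "segcomp n = {S. segmented S \<and> sum_list (map sum_list S) = n}"
  unfolding segcomp_def segmented_def by auto

lemma segmentedE:
  assumes "segmented S"
  obtains p c S' where "S = (p # c) # S'" "0 < p"
  using assms unfolding segmented_def by (cases S; cases "hd S") auto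

fun segcomp_of_gaps :: "nat list \<Rightarrow> nat list list" where
  "segcomp_of_gaps [] = [[1]]"
| "segcomp_of_gaps (g # gs) = (let S = segcomp_of_gaps gs in
     if g = 0 then (Suc (hd (hd S)) # tl (hd S)) # tl S
     else if g = 1 then (1 # hd S) # tl S
     else [1] # S)"

function gaps_of_segcomp :: "nat list list \<Rightarrow> nat list" where
  "gaps_of_segcomp [] = []"
| "gaps_of_segcomp ([] # S) = []"
| "gaps_of_segcomp ((p # c) # S) =
     (if 1 < p then 0 # gaps_of_segcomp (((p - 1) # c) # S)
      else if c \<noteq> [] then 1 # gaps_of_segcomp (c # S)
      else if S \<noteq> [] then 2 # gaps_of_segcomp S else [])"
  by pat_completeness auto
termination
  by (relation "measure (\<lambda>S. sum_list (map sum_list S) + sum_list (map length S) + length S)")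
    auto

lemma segcomp_of_gaps_segcomp:
  "segmented (segcomp_of_gaps gs) \<and> sum_list (map sum_list (segcomp_of_gaps gs)) = Suc (length gs)"
proof (induction gs)
  case (Cons g gs)
  then obtain p c S where "segcomp_of_gaps gs = (p # c) # S" "0 < p"
    by (meson segmentedE)
  with Cons show ?case
    by (auto simp: segmented_def Let_def)
qed (simp add: segmented_def)

lemma gaps_of_segcomp_of_gaps: "set gs \<subseteq> {0, 1, 2} \<Longrightarrow> gaps_of_segcomp (segcomp_of_gaps gs) = gs"
proof (induction gs)
  case (Cons g gs)
  obtain p c S where "segcomp_of_gaps gs = (p # c) # S" "0 < p"
    using segcomp_of_gaps_segcomp by (meson segmentedE)
  with Cons show ?case
    by (auto simp: Let_def)
qed simp

lemma segcomp_of_gaps_of_segcomp: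
  "segmented S \<Longrightarrow> segcomp_of_gaps (gaps_of_segcomp S) = S \<and> set (gaps_of_segcomp S) \<subseteq> {0, 1, 2}
     \<and> Suc (length (gaps_of_segcomp S)) = sum_list (map sum_list S)"
proof (induction S rule: gaps_of_segcomp.induct)
  case (3 p c S)
  have "0 < p" using "3.prems" by (simp add: segmented_def)
  consider "1 < p" | "p = 1" "c \<noteq> []" | "p = 1" "c = []" "S \<noteq> []" | "p = 1" "c = []" "S = []"
    using \<open>0 < p\<close> by linarith
  then show ?case
  proof cases
    case 1
    with "3.IH"(1) "3.prems" show ?thesis by (auto simp: segmented_def Let_def)
  next
    case 2
    with "3.IH"(2) "3.prems" show ?thesis by (auto simp: segmented_def Let_def)
  next
    case 3
    with "3.IH"(3) "3.prems" show ?thesis by (auto simp: segmented_def Let_def)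
  qed simp
qed (simp_all add: segmented_def)

lemma bij_betw_segcomp_of_gaps:
  "bij_betw segcomp_of_gaps {gs. set gs \<subseteq> {0, 1, 2} \<and> length gs = m} (segcomp (Suc m))"
proof (rule bij_betw_byWitness[where f' = gaps_of_segcomp])
  show "segcomp_of_gaps ` {gs. set gs \<subseteq> {0, 1, 2} \<and> length gs = m} \<subseteq> segcomp (Suc m)"
    using segcomp_of_gaps_segcomp by (auto simp: segcomp_eq_segmented)
  show "gaps_of_segcomp ` segcomp (Suc m) \<subseteq> {gs. set gs \<subseteq> {0, 1, 2} \<and> length gs = m}"
  proof
    fix gs assume "gs \<in> gaps_of_segcomp ` segcomp (Suc m)"
    then obtain S where "S \<in> segcomp (Suc m)" "gs = gaps_of_segcomp S" by blast
    then show "gs \<in> {gs. set gs \<subseteq> {0, 1, 2} \<and> length gs = m}"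
      using segcomp_of_gaps_of_segcomp[of S] by (simp add: segcomp_eq_segmented)
  qed
qed (auto simp: gaps_of_segcomp_of_gaps segcomp_of_gaps_of_segcomp segcomp_eq_segmented)

lemma bij_betw_tl_SComp_arity:
  assumes "1 \<le> n"
  shows "bij_betw tl {x \<in> SComp. length x = n} {gs. set gs \<subseteq> {0, 1, 2} \<and> length gs = n - 1}"
proof (rule bij_betw_byWitness[where f' = "Cons 0"])
  show "\<forall>x\<in>{x \<in> SComp. length x = n}. 0 # tl x = x"
    by (auto simp: SComp_eq_zero_words zero_words_def) (metis list.collapse)
  show "Cons 0 ` {gs. set gs \<subseteq> {0, 1, 2} \<and> length gs = n - 1} \<subseteq> {x \<in> SComp. length x = n}"
    using assms by (auto simp: SComp_eq_zero_words zero_words_def)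
  show "tl ` {x \<in> SComp. length x = n} \<subseteq> {gs. set gs \<subseteq> {0, 1, 2} \<and> length gs = n - 1}"
    by (auto simp: SComp_eq_zero_words zero_words_def dest: list.set_sel(2))
qed simp

lemma SComp_arity_bij_segcomp:
  assumes "1 \<le> n"
  shows "bij_betw (segcomp_of_gaps \<circ> tl) {x \<in> SComp. length x = n} (segcomp n)"
  using bij_betw_trans[OF bij_betw_tl_SComp_arity[OF assms] bij_betw_segcomp_of_gaps[of "n - 1"]]
    assms by simp

section \<open>The presentation\<close>

fun gval :: "gen \<Rightarrow> nat" where
  "gval A = 0" | "gval B = 1" | "gval C = 2"

text \<open>gen_diff x y is the generator of value gval x - gval y (mod 3).\<close>

fun gen_diff :: "gen \<Rightarrow> gen \<Rightarrow> gen" where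
  "gen_diff A A = A" | "gen_diff A B = C" | "gen_diff A C = B"
| "gen_diff B A = B" | "gen_diff B B = A" | "gen_diff B C = C"
| "gen_diff C A = C" | "gen_diff C B = B" | "gen_diff C C = A"

fun word_of_tree :: "tree \<Rightarrow> nat list" where
  "word_of_tree Leaf = [0]"
| "word_of_tree (Node g l r) = word_of_tree l @ shift_word (gval g) (word_of_tree r)"

lemma word_of_tree_zero_words: "word_of_tree t \<in> zero_words"
  by (induction t) (use set_shift_word in \<open>auto simp: zero_words_def\<close>)

lemma length_word_of_tree [simp]: "length (word_of_tree t) = arity t"
  by (induction t) (simp_all add: shift_word_def)

lemma arity_pos: "1 \<le> arity t"
  by (induction t) auto

lemma wcomp_append_left: "1 \<le> i \<Longrightarrow> i \<le> length x \<Longrightarrow> wcomp (x @ z) i y = wcomp x i y @ z"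
  unfolding wcomp_def by (simp add: nth_append)

lemma wcomp_append_right: "1 \<le> j \<Longrightarrow> wcomp (x @ z) (length x + j) y = x @ wcomp z j y"
  unfolding wcomp_def by (simp add: nth_append)

lemma shift_word_wcomp:
  "1 \<le> i \<Longrightarrow> i \<le> length x \<Longrightarrow> shift_word k (wcomp x i y) = wcomp (shift_word k x) i y"
  unfolding wcomp_def shift_word_def
  by (simp add: take_map drop_map mod_add_right_eq mod_add_left_eq add.assoc)

lemma wcomp_unit_left: "set y \<subseteq> {0, 1, 2} \<Longrightarrow> wcomp [0] 1 y = y"
  unfolding wcomp_def by simp (rule map_idI, auto)

lemma word_of_tree_graft:
  "1 \<le> i \<Longrightarrow> i \<le> arity s \<Longrightarrow> word_of_tree (graft s i t) = wcomp (word_of_tree s) i (word_of_tree t)"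
proof (induction s arbitrary: i)
  case Leaf
  then show ?case
    using wcomp_unit_left word_of_tree_zero_words by (simp add: zero_words_def)
next
  case (Node g l r)
  show ?case
  proof (cases "i \<le> arity l")
    case True
    with Node show ?thesis by (simp add: wcomp_append_left)
  next
    case False
    define j where "j = i - arity l"
    have j: "i = length (word_of_tree l) + j" "1 \<le> j" "j \<le> arity r"
      using False Node.prems unfolding j_def by auto
    have "word_of_tree (graft (Node g l r) i t)
        = word_of_tree l @ shift_word (gval g) (wcomp (word_of_tree r) j (word_of_tree t))"
      using False Node.IH(2) j unfolding j_def by simp
    also have "\<dots> = word_of_tree l @ wcomp (shift_word (gval g) (word_of_tree r)) j (word_of_tree t)"
      using shift_word_wcomp j by simp
    also have "\<dots> = wcomp (word_of_tree (Node g l r)) i (word_of_tree t)"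
      using wcomp_append_right[of j "word_of_tree l"] j by simp
    finally show ?thesis .
  qed
qed

lemma SComp_subset_range_word_of_tree: "SComp \<subseteq> range word_of_tree"
proof
  fix x assume "x \<in> SComp"
  then show "x \<in> range word_of_tree"
  proof induction
    case unit
    show ?case by (metis word_of_tree.simps(1) rangeI)
  next
    case gen00
    have "word_of_tree (gtree A) = [0, 0]" by (simp add: gtree_def shift_word_def)
    then show ?case by (metis rangeI)
  next
    case gen01
    have "word_of_tree (gtree B) = [0, 1]" by (simp add: gtree_def shift_word_def)
    then show ?case by (metis rangeI)
  next
    case gen02
    have "word_of_tree (gtree C) = [0, 2]" by (simp add: gtree_def shift_word_def)
    then show ?case by (metis rangeI)
  next
    case (comp x y i)
    then obtain s t where "x = word_of_tree s" "y = word_of_tree t" by auto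
    with comp have "wcomp x i y = word_of_tree (graft s i t)" by (simp add: word_of_tree_graft)
    then show ?case by simp
  qed
qed

lemma opcong_imp_word_of_tree_eq: "opcong s t \<Longrightarrow> word_of_tree s = word_of_tree t"
proof (induction rule: opcong.induct)
  case (rel s t)
  then show ?case by (auto simp: rels_def gtree_def shift_word_def)
next
  case (compL s s' i t)
  moreover have "i \<le> arity s'"
    using compL length_word_of_tree[of s] length_word_of_tree[of s'] by simp
  ultimately show ?case by (simp add: word_of_tree_graft)
next
  case (compR t t' i s)
  then show ?case by (simp add: word_of_tree_graft)
qed auto

fun comb :: "gen list \<Rightarrow> tree" where
  "comb [] = Leaf"
| "comb (g # gs) = Node g Leaf (comb gs)"

lemma arity_comb [simp]: "arity (comb gs) = Suc (length gs)"
  by (induction gs) auto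

lemma opcong_Node_left: "opcong l l' \<Longrightarrow> opcong (Node g l r) (Node g l' r)"
  using opcong.compR[of l l' 1 "Node g Leaf r"] by simp

lemma opcong_Node_right: "opcong r r' \<Longrightarrow> opcong (Node g l r) (Node g l r')"
  using opcong.compR[of r r' "arity l + 1" "Node g l Leaf"] by simp

lemma rels_rotate: "(Node x (gtree y) Leaf, Node y Leaf (gtree (gen_diff x y))) \<in> rels"
  by (cases x; cases y) (simp_all add: rels_def gtree_def)

lemma opcong_rotate: "opcong (Node x (Node y a b) c) (Node y a (Node (gen_diff x y) b c))"
proof -
  let ?z = "gen_diff x y"
  have "opcong (Node x (Node y Leaf Leaf) Leaf) (Node y Leaf (Node ?z Leaf Leaf))"
    using rels_rotate opcong.rel unfolding gtree_def by blast
  from opcong.compL[OF this, of 3 c]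
  have "opcong (Node x (Node y Leaf Leaf) c) (Node y Leaf (Node ?z Leaf c))"
    by (simp add: numeral_3_eq_3)
  from opcong.compL[OF this, of 2 b]
  have "opcong (Node x (Node y Leaf b) c) (Node y Leaf (Node ?z b c))"
    using arity_pos[of c] by (simp add: numeral_2_eq_2)
  from opcong.compL[OF this, of 1 a]
  show ?thesis
    using arity_pos[of b] arity_pos[of c] by simp
qed

lemma opcong_Node_comb: "\<exists>gs. opcong (Node g (comb ls) (comb rs)) (comb gs)"
proof (induction ls arbitrary: g)
  case Nil
  have "opcong (Node g (comb []) (comb rs)) (comb (g # rs))" by (simp add: opcong.refl)
  then show ?case by blast
next
  case (Cons h ls)
  obtain gs where gs: "opcong (Node (gen_diff g h) (comb ls) (comb rs)) (comb gs)"
    using Cons by blast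
  have "opcong (Node g (comb (h # ls)) (comb rs)) (Node h Leaf (Node (gen_diff g h) (comb ls) (comb rs)))"
    using opcong_rotate by simp
  moreover have "opcong (Node h Leaf (Node (gen_diff g h) (comb ls) (comb rs))) (comb (h # gs))"
    using opcong_Node_right[OF gs] by simp
  ultimately show ?case by (meson opcong.trans)
qed

lemma opcong_comb: "\<exists>gs. opcong t (comb gs)"
proof (induction t)
  case Leaf
  have "opcong Leaf (comb [])" by (simp add: opcong.refl)
  then show ?case by blast
next
  case (Node g l r)
  obtain ls rs where "opcong l (comb ls)" "opcong r (comb rs)" using Node by blast
  then have "opcong (Node g l r) (Node g (comb ls) (comb rs))"
    by (meson opcong_Node_left opcong_Node_right opcong.trans)
  then show ?case using opcong_Node_comb by (meson opcong.trans)
qed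

lemma shift_word_inj:
  assumes "shift_word k x = shift_word k y" "set x \<subseteq> {0, 1, 2}" "set y \<subseteq> {0, 1, 2}"
  shows "x = y"
proof (rule map_inj_on)
  show "map (\<lambda>b. (k + b) mod 3) x = map (\<lambda>b. (k + b) mod 3) y"
    using assms(1) unfolding shift_word_def .
  have "inj_on (\<lambda>b. (k mod 3 + b) mod 3) {0, 1, 2::nat}"
    using mod_3_cases[of k] unfolding inj_on_def by auto
  then have "inj_on (\<lambda>b. (k + b) mod 3) {0, 1, 2::nat}"
    by (simp add: mod_add_left_eq)
  then show "inj_on (\<lambda>b. (k + b) mod 3) (set x \<union> set y)"
    using assms(2,3) by (meson inj_on_subset Un_least)
qed

lemma word_of_tree_comb_inj: "word_of_tree (comb gs) = word_of_tree (comb hs) \<Longrightarrow> gs = hs"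
proof (induction gs arbitrary: hs)
  case Nil
  then have "arity (comb []) = arity (comb hs)"
    by (metis length_word_of_tree)
  then show ?case by simp
next
  case (Cons g gs)
  then have "arity (comb (g # gs)) = arity (comb hs)"
    by (metis length_word_of_tree)
  then obtain h hs' where hs: "hs = h # hs'"
    by (cases hs) simp_all
  let ?P = "word_of_tree (comb gs)" and ?Q = "word_of_tree (comb hs')"
  have eq: "shift_word (gval g) ?P = shift_word (gval h) ?Q"
    using Cons.prems hs by simp
  have P: "?P \<in> zero_words" and Q: "?Q \<in> zero_words"
    using word_of_tree_zero_words by blast+
  have "hd (shift_word (gval g) ?P) = hd (shift_word (gval h) ?Q)"
    using eq by simp
  then have "gval g mod 3 = gval h mod 3"
    using P Q by (simp add: zero_words_def shift_word_def hd_map)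
  then have "g = h" by (cases g; cases h) auto
  with eq P Q have "?P = ?Q"
    using shift_word_inj unfolding zero_words_def by blast
  then show ?case using Cons.IH \<open>g = h\<close> hs by simp
qed

lemma word_of_tree_eq_iff_opcong: "word_of_tree s = word_of_tree t \<longleftrightarrow> opcong s t"
proof
  assume eq: "word_of_tree s = word_of_tree t"
  obtain gs hs where s: "opcong s (comb gs)" and t: "opcong t (comb hs)"
    using opcong_comb by blast
  have "word_of_tree (comb gs) = word_of_tree (comb hs)"
    using eq opcong_imp_word_of_tree_eq[OF s] opcong_imp_word_of_tree_eq[OF t] by simp
  then have "gs = hs" by (rule word_of_tree_comb_inj)
  then show "opcong s t" using s t by (meson opcong.sym opcong.trans)
qed (rule opcong_imp_word_of_tree_eq)

lemma presents_SComp_word_of_tree: "presents_SComp word_of_tree"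
proof -
  have "word_of_tree t \<in> SComp" for t
    using word_of_tree_zero_words SComp_eq_zero_words by blast
  then show ?thesis
    unfolding presents_SComp_def
    using word_of_tree_graft SComp_subset_range_word_of_tree word_of_tree_eq_iff_opcong by simp
qed

theorem mainTheorem8:
  shows "SComp = {x. x \<noteq> [] \<and> set x \<subseteq> {0, 1, 2} \<and> hd x = 0}
     \<and> (\<forall>n \<ge> 1. \<exists>f. bij_betw f {x \<in> SComp. length x = n} (segcomp n))
     \<and> (\<exists>phi. presents_SComp phi)"
proof (intro conjI allI impI)
  show "SComp = {x. x \<noteq> [] \<and> set x \<subseteq> {0, 1, 2} \<and> hd x = 0}"
    using SComp_eq_zero_words unfolding zero_words_def .
  show "\<exists>f. bij_betw f {x \<in> SComp. length x = n} (segcomp n)" if "1 \<le> n" for n :: nat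
    using SComp_arity_bij_segcomp[OF that] by blast
  show "\<exists>phi. presents_SComp phi"
    using presents_SComp_word_of_tree by blast
qed

end
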